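(* Let $(q,E)$ be an annotated CQ. (1) If there is any CQ that fits $E$, then there is a $\preceq^{\mathrm{edit\text{-}dist}}$-repair for $(q,E)$. (2) If there is any CQ $q'$ that fits $E$ with $q\subseteq q'$, then there is a $\preceq^{\mathrm{edit\text{-}dist}}$-generalization for $(q,E)$. (3) If there is any CQ $q'$ that fits $E$ with $q'\subseteq q$, then there is a $\preceq^{\mathrm{edit\text{-}dist}}$-specialization for $(q,E)$. Moreover, there are at most finitely many $\preceq^{\mathrm{edit\text{-}dist}}$-repairs, $\preceq^{\mathrm{edit\text{-}dist}}$-generalizations, and $\preceq^{\mathrm{edit\text{-}dist}}$-specializations for $(q,E)$, up to equivalence.
   Context: All CQs are $q(x_1,\dots,x_k)\text{ :- }\alpha_1,\dots,\alpha_n$ (relational atoms, no constants, pairwise distinct answer variables each occurring in an atom). Data examples are $(I,\mathbf a)$, $I$ a finite instance, $\mathbf a$ a $k$-tuple of its values; $[\![q]\!]$ is the set of data examples with $\mathbf a\in q(I)$; $\subseteq$ query containment, equivalence = containment both ways. An annotated CQ is $(q,E)$ with $E=(E^+,E^-)$ labeled examples; $q$ fits $E$ iff $E^+\subseteq[\![q]\!]$ and $E^-\cap[\![q]\!]=\emptyset$. $\mathrm{edit\text{-}dist}(q_1,q_2)=\min_\rho|\mathrm{core}(e_{q_1})\oplus\mathrm{core}(e_{\rho(q_2)})|$ over bijective variable renamings $\rho$ of $q_2(y_1,\dots,y_k)$ with $\rho(y_i)=x_i$, where $e_q$ is the canonical example (atoms of $q$ as facts, answer tuple distinguished), $\mathrm{core}$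 the homomorphism core, $\oplus$ symmetric difference of facts. $q'\preceq_q q''$ iff $\mathrm{edit\text{-}dist}(q,q')\le\mathrm{edit\text{-}dist}(q,q'')$; $\prec_q$ strict part. A $\preceq$-repair for $(q,E)$: a CQ $q'$ fitting $E$ with no CQ $q''$ fitting $E$ and $q''\prec_q q'$. A $\preceq$-generalization (resp. specialization): a CQ $q'$ fitting $E$ with $q\subseteq q'$ (resp. $q'\subseteq q$) such that no CQ $q''$ fitting $E$ with $q\subseteq q''$ (resp. $q''\subseteq q$) has $q''\prec_q q'$. Candidate CQs use only relation symbols occurring in $q$ and $E$. *)

theory Defs
  imports Main
begin

(* The arity of an occurrence is the length of its tuple; a "relation symbol" in the
   sense of the paper is identified with the pair (R, arity). *)
type_synonym 'r fact = "'r \<times> nat list"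

type_synonym 'r inst = "'r fact set"

type_synonym 'r dex = "'r inst \<times> nat list"

definition adom :: "'r inst \<Rightarrow> nat set" where
  "adom I = (\<Union>(R, ts)\<in>I. set ts)"

definition data_example :: "nat \<Rightarrow> 'r dex \<Rightarrow> bool" where
  "data_example k e \<longleftrightarrow> finite (fst e) \<and> length (snd e) = k \<and> set (snd e) \<subseteq> adom (fst e)"

type_synonym 'r cq = "nat list \<times> 'r fact set"

definition ans :: "'r cq \<Rightarrow> nat list" where "ans q = fst q"
definition atoms :: "'r cq \<Rightarrow> 'r fact set" where "atoms q = snd q"

definition wf_cq :: "'r cq \<Rightarrow> bool" where
  "wf_cq q \<longleftrightarrow> finite (atoms q) \<and> distinct (ans q) \<and>
     (\<forall>x\<in>set (ans q). \<exists>(R, ts)\<in>atoms q. x \<in> set ts)"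

definition hom_to :: "'r dex \<Rightarrow> 'r dex \<Rightarrow> bool" where
  "hom_to e1 e2 \<longleftrightarrow> (\<exists>h. (\<forall>(R, ts)\<in>fst e1. (R, map h ts) \<in> fst e2) \<and> map h (snd e1) = snd e2)"

definition canon :: "'r cq \<Rightarrow> 'r dex" where
  "canon q = (atoms q, ans q)"

definition in_sem :: "'r dex \<Rightarrow> 'r cq \<Rightarrow> bool" where
  "in_sem e q \<longleftrightarrow> hom_to (canon q) e"

definition cq_contained :: "'r cq \<Rightarrow> 'r cq \<Rightarrow> bool" where
  "cq_contained q1 q2 \<longleftrightarrow>
     (\<forall>e. data_example (length (snd e)) e \<longrightarrow> in_sem e q1 \<longrightarrow> in_sem e q2)"

definition cq_equiv :: "'r cq \<Rightarrow> 'r cq \<Rightarrow> bool" where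
  "cq_equiv q1 q2 \<longleftrightarrow> cq_contained q1 q2 \<and> cq_contained q2 q1"

definition is_core_of :: "'r inst \<Rightarrow> 'r dex \<Rightarrow> bool" where
  "is_core_of C e \<longleftrightarrow> C \<subseteq> fst e \<and> hom_to e (C, snd e) \<and>
     (\<forall>C'. C' \<subset> C \<longrightarrow> \<not> hom_to (C, snd e) (C', snd e))"

definition rename :: "(nat \<Rightarrow> nat) \<Rightarrow> 'r cq \<Rightarrow> 'r cq" where
  "rename \<rho> q = (map \<rho> (ans q), (\<lambda>(R, ts). (R, map \<rho> ts)) ` atoms q)"

(* edit distance: minimum over bijective renamings rho of the variables of q2 mapping the
   answer variables of q2 position-wise onto those of q1 (and over the choice of the cores,
   which are unique only up to isomorphism) *)
definition edit_dist :: "'r cq \<Rightarrow> 'r cq \<Rightarrow> nat" where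
  "edit_dist q1 q2 = Inf {card (C1 - C2 \<union> (C2 - C1)) | C1 C2 \<rho>.
      bij \<rho> \<and> map \<rho> (ans q2) = ans q1 \<and>
      is_core_of C1 (canon q1) \<and> is_core_of C2 (canon (rename \<rho> q2))}"

definition syms_inst :: "'r inst \<Rightarrow> ('r \<times> nat) set" where
  "syms_inst I = (\<lambda>(R, ts). (R, length ts)) ` I"

definition syms_ex :: "'r dex set \<Rightarrow> ('r \<times> nat) set" where
  "syms_ex E = (\<Union>e\<in>E. syms_inst (fst e))"

definition candidate :: "'r cq \<Rightarrow> 'r dex set \<Rightarrow> 'r dex set \<Rightarrow> 'r cq \<Rightarrow> bool" where
  "candidate q Ep En q' \<longleftrightarrow> wf_cq q' \<and> length (ans q') = length (ans q) \<and>
     syms_inst (atoms q') \<subseteq> syms_inst (atoms q) \<union> syms_ex Ep \<union> syms_ex En"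

definition fits :: "'r cq \<Rightarrow> 'r dex set \<Rightarrow> 'r dex set \<Rightarrow> bool" where
  "fits q' Ep En \<longleftrightarrow> (\<forall>e\<in>Ep. in_sem e q') \<and> (\<forall>e\<in>En. \<not> in_sem e q')"

definition is_repair :: "'r cq \<Rightarrow> 'r dex set \<Rightarrow> 'r dex set \<Rightarrow> 'r cq \<Rightarrow> bool" where
  "is_repair q Ep En q' \<longleftrightarrow> candidate q Ep En q' \<and> fits q' Ep En \<and>
     \<not> (\<exists>q''. candidate q Ep En q'' \<and> fits q'' Ep En \<and> edit_dist q q'' < edit_dist q q')"

definition is_generalization :: "'r cq \<Rightarrow> 'r dex set \<Rightarrow> 'r dex set \<Rightarrow> 'r cq \<Rightarrow> bool" where
  "is_generalization q Ep En q' \<longleftrightarrow> candidate q Ep En q' \<and> fits q' Ep En \<and> cq_contained q q' \<and>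
     \<not> (\<exists>q''. candidate q Ep En q'' \<and> fits q'' Ep En \<and> cq_contained q q'' \<and>
            edit_dist q q'' < edit_dist q q')"

definition is_specialization :: "'r cq \<Rightarrow> 'r dex set \<Rightarrow> 'r dex set \<Rightarrow> 'r cq \<Rightarrow> bool" where
  "is_specialization q Ep En q' \<longleftrightarrow> candidate q Ep En q' \<and> fits q' Ep En \<and> cq_contained q' q \<and>
     \<not> (\<exists>q''. candidate q Ep En q'' \<and> fits q'' Ep En \<and> cq_contained q'' q \<and>
            edit_dist q q'' < edit_dist q q')"

definition finitely_many_upto_equiv :: "('r cq \<Rightarrow> bool) \<Rightarrow> bool" where
  "finitely_many_upto_equiv P \<longleftrightarrow> (\<exists>F. finite F \<and> (\<forall>q'. P q' \<longrightarrow> (\<exists>q''\<in>F. cq_equiv q' q'')))"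

end

theory Submission
  imports Defs "HOL-Combinatorics.Transposition"
begin

text \<open>
  Edit distances are natural numbers, so every nonempty class of fitting candidates has a
  member of least distance to \<open>q\<close>. Repairs, generalizations and specializations are
  exactly these minimisers, and within each class they all have the same distance \<open>d\<close>.
  A CQ \<open>q'\<close> at distance at most \<open>d\<close> is equivalent to the CQ whose atoms are the core
  \<open>C\<close> of a renaming of \<open>q'\<close> realising the distance. All but at most \<open>d\<close> atoms of
  \<open>C\<close> belong to the core of \<open>q\<close>, so \<open>C\<close> has at most \<open>|adom q| + d A\<close> variables,
  \<open>A\<close> bounding the arities of the available relation symbols. Renaming these
  injectively into a fixed finite range, keeping the answer variables of \<open>q\<close>, leaves only
  finitely many CQs, one in each equivalence class of the queries in question.
\<close>

lemma hom_to_trans: "hom_to e1 e2 \<Longrightarrow> hom_to e2 e3 \<Longrightarrow> hom_to e1 e3"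
proof -
  assume "hom_to e1 e2" "hom_to e2 e3"
  then obtain h g where h: "\<forall>(R, ts)\<in>fst e1. (R, map h ts) \<in> fst e2" "map h (snd e1) = snd e2"
    and g: "\<forall>(R, ts)\<in>fst e2. (R, map g ts) \<in> fst e3" "map g (snd e2) = snd e3"
    unfolding hom_to_def by blast
  have "\<forall>(R, ts)\<in>fst e1. (R, map (g \<circ> h) ts) \<in> fst e3" using h(1) g(1) by fastforce
  moreover have "map (g \<circ> h) (snd e1) = snd e3" using h(2) g(2) by (metis map_map)
  ultimately show ?thesis unfolding hom_to_def by blast
qed

lemma hom_to_subset: "C \<subseteq> I \<Longrightarrow> hom_to (C, a) (I, a)"
  unfolding hom_to_def by (auto intro!: exI[of _ id])

lemma cq_equivI_hom:
  "hom_to (canon q1) (canon q2) \<Longrightarrow> hom_to (canon q2) (canon q1) \<Longrightarrow> cq_equiv q1 q2"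
  unfolding cq_equiv_def cq_contained_def in_sem_def using hom_to_trans by blast

lemma cq_equiv_trans: "cq_equiv q1 q2 \<Longrightarrow> cq_equiv q2 q3 \<Longrightarrow> cq_equiv q1 q3"
  unfolding cq_equiv_def cq_contained_def by blast

lemma cq_equiv_rename:
  assumes inj: "inj_on \<sigma> (adom (atoms q) \<union> set (ans q))"
  shows "cq_equiv q (rename \<sigma> q)"
proof (rule cq_equivI_hom)
  show "hom_to (canon q) (canon (rename \<sigma> q))"
    unfolding hom_to_def canon_def rename_def atoms_def ans_def by (auto intro!: exI[of _ \<sigma>])
  let ?V = "adom (atoms q) \<union> set (ans q)"
  have inv: "map (inv_into ?V \<sigma>) (map \<sigma> ts) = ts" if "set ts \<subseteq> ?V" for ts
    using that inj by (induction ts) auto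
  have "set ts \<subseteq> ?V" if "(R, ts) \<in> atoms q" for R ts
    using that unfolding adom_def by auto
  then have "\<forall>(R, ts)\<in>atoms q. map (inv_into ?V \<sigma>) (map \<sigma> ts) = ts"
    using inv by blast
  moreover have "map (inv_into ?V \<sigma>) (map \<sigma> (ans q)) = ans q"
    by (rule inv) simp
  ultimately show "hom_to (canon (rename \<sigma> q)) (canon q)"
    unfolding hom_to_def canon_def rename_def
    by (intro exI[of _ "inv_into ?V \<sigma>"]) (auto simp del: map_map simp: atoms_def ans_def)
qed

lemma core_exists:
  assumes "finite (fst e)"
  shows "\<exists>C. is_core_of C e"
proof -
  let ?P = "\<lambda>C. C \<subseteq> fst e \<and> hom_to e (C, snd e)"
  have "?P (fst e)" unfolding hom_to_def by (auto intro!: exI[of _ id])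
  then obtain C where C: "?P C" and least: "\<And>C'. ?P C' \<Longrightarrow> card C \<le> card C'"
    using ex_has_least_nat[of ?P "fst e" card] by blast
  have "\<not> hom_to (C, snd e) (C', snd e)" if "C' \<subset> C" for C'
  proof
    assume "hom_to (C, snd e) (C', snd e)"
    then have "card C \<le> card C'" using C that by (intro least) (auto intro: hom_to_trans)
    moreover have "card C' < card C"
      using that C assms by (meson psubset_card_mono rev_finite_subset)
    ultimately show False by simp
  qed
  then show ?thesis using C unfolding is_core_of_def by blast
qed

lemma cq_equiv_core:
  assumes "is_core_of C (canon q)"
  shows "cq_equiv q (ans q, C)"
  using assms hom_to_subset[of C "atoms q" "ans q"]
  by (intro cq_equivI_hom) (auto simp: is_core_of_def canon_def atoms_def ans_def)

lemma bij_map_eq: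
  fixes xs ys :: "'a list"
  assumes "distinct xs" "distinct ys" "length xs = length ys"
  shows "\<exists>\<rho>. bij \<rho> \<and> map \<rho> xs = ys"
  using assms
proof (induction xs arbitrary: ys)
  case Nil
  then show ?case using bij_id by auto
next
  case (Cons x xs)
  then obtain y ys' where ys: "ys = y # ys'" by (cases ys) auto
  with Cons obtain \<rho> where \<rho>: "bij \<rho>" "map \<rho> xs = ys'" by auto
  have "\<rho> x \<notin> set ys'" "y \<notin> set ys'"
    using \<rho> Cons.prems ys by (auto simp: bij_def inj_eq)
  then have "map (transpose (\<rho> x) y) ys' = ys'"
    by (intro map_idI) (metis transpose_apply_other)
  then have "map (transpose (\<rho> x) y \<circ> \<rho>) (x # xs) = ys"
    using \<rho>(2) ys by (simp flip: map_map)
  moreover have "bij (transpose (\<rho> x) y \<circ> \<rho>)" using \<rho>(1) by (simp add: bij_comp)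
  ultimately show ?case by blast
qed

lemma edit_dist_attained:
  assumes "wf_cq q" "wf_cq q'" "length (ans q') = length (ans q)"
  obtains \<rho> C1 C2 where "bij \<rho>" "map \<rho> (ans q') = ans q"
    "is_core_of C1 (canon q)" "is_core_of C2 (canon (rename \<rho> q'))"
    "edit_dist q q' = card (C1 - C2 \<union> (C2 - C1))"
proof -
  let ?D = "{card (C1 - C2 \<union> (C2 - C1)) | C1 C2 \<rho>. bij \<rho> \<and> map \<rho> (ans q') = ans q \<and>
      is_core_of C1 (canon q) \<and> is_core_of C2 (canon (rename \<rho> q'))}"
  obtain \<rho> :: "nat \<Rightarrow> nat" where "bij \<rho>" "map \<rho> (ans q') = ans q"
    using bij_map_eq assms unfolding wf_cq_def by metis
  moreover have "finite (fst (canon q))" "finite (fst (canon (rename \<rho> q')))"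
    using assms(1,2) by (simp_all add: wf_cq_def canon_def rename_def atoms_def)
  then obtain C1 C2 where "is_core_of C1 (canon q)" "is_core_of C2 (canon (rename \<rho> q'))"
    using core_exists by metis
  ultimately have "?D \<noteq> {}" by blast
  then have "edit_dist q q' \<in> ?D" unfolding edit_dist_def by (rule Inf_nat_def1)
  then show thesis using that by blast
qed

lemma adom_rename_facts: "adom ((\<lambda>(R, ts). (R, map \<sigma> ts)) ` C) = \<sigma> ` adom C"
  unfolding adom_def by (force simp: image_UN)

lemma syms_inst_rename_facts: "syms_inst ((\<lambda>(R, ts). (R, map \<sigma> ts)) ` C) = syms_inst C"
  unfolding syms_inst_def image_image by (auto simp: case_prod_beta)

lemma ex_equiv_core_within_edit_dist:
  assumes "wf_cq q" "wf_cq q'" "length (ans q') = length (ans q)"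
  obtains C where "finite C" "cq_equiv q' (ans q, C)" "syms_inst C \<subseteq> syms_inst (atoms q')"
    "card (C - atoms q) \<le> edit_dist q q'"
proof -
  obtain \<rho> C1 C2 where \<rho>: "bij \<rho>" "map \<rho> (ans q') = ans q"
    and C1: "is_core_of C1 (canon q)" and C2: "is_core_of C2 (canon (rename \<rho> q'))"
    and dist: "edit_dist q q' = card (C1 - C2 \<union> (C2 - C1))"
    using edit_dist_attained[OF assms] .
  let ?q\<rho> = "rename \<rho> q'"
  have C2_sub: "C2 \<subseteq> atoms ?q\<rho>" and C1_sub: "C1 \<subseteq> atoms q"
    using C1 C2 by (auto simp: is_core_of_def canon_def)
  have fin: "finite (atoms ?q\<rho>)" "finite (atoms q)"
    using assms(1,2) by (auto simp: wf_cq_def rename_def atoms_def)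
  have eq1: "cq_equiv q' ?q\<rho>"
    using \<rho>(1) by (intro cq_equiv_rename) (meson bij_is_inj inj_on_subset subset_UNIV)
  have eq2: "cq_equiv ?q\<rho> (ans q, C2)"
    using cq_equiv_core[OF C2] \<rho>(2) by (simp add: rename_def ans_def)
  have syms: "syms_inst C2 \<subseteq> syms_inst (atoms q')"
  proof -
    have "syms_inst C2 \<subseteq> syms_inst (atoms ?q\<rho>)"
      using C2_sub unfolding syms_inst_def by (rule image_mono)
    also have "\<dots> = syms_inst (atoms q')"
      by (simp add: rename_def atoms_def syms_inst_rename_facts)
    finally show ?thesis .
  qed
  have card: "card (C2 - atoms q) \<le> edit_dist q q'"
  proof -
    have "finite (C1 - C2 \<union> (C2 - C1))"
      using C1_sub C2_sub fin by (meson finite_Diff finite_UnI finite_subset)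
    moreover have "C2 - atoms q \<subseteq> C1 - C2 \<union> (C2 - C1)" using C1_sub by blast
    ultimately show ?thesis unfolding dist by (rule card_mono)
  qed
  have "finite C2" using C2_sub fin(1) by (rule finite_subset)
  then show thesis using cq_equiv_trans[OF eq1 eq2] syms card by (rule that)
qed

lemma finite_adom: "finite D \<Longrightarrow> finite (adom D)"
  unfolding adom_def by auto

definition facts_over :: "('r \<times> nat) set \<Rightarrow> nat set \<Rightarrow> 'r fact set" where
  "facts_over S V = {(R, ts). (R, length ts) \<in> S \<and> set ts \<subseteq> V}"

lemma subset_facts_over_iff: "C \<subseteq> facts_over S V \<longleftrightarrow> syms_inst C \<subseteq> S \<and> adom C \<subseteq> V"
  unfolding facts_over_def syms_inst_def adom_def by auto

lemma finite_facts_over: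
  assumes "finite S" "finite V"
  shows "finite (facts_over S V)"
proof -
  have "facts_over S V \<subseteq> (\<Union>(R, n)\<in>S. Pair R ` {ts. set ts \<subseteq> V \<and> length ts = n})"
    unfolding facts_over_def by force
  moreover have "finite (\<Union>(R, n)\<in>S. Pair R ` {ts. set ts \<subseteq> V \<and> length ts = n})"
    using assms by (auto intro!: finite_lists_length_eq)
  ultimately show ?thesis by (rule finite_subset)
qed

lemma card_adom_le:
  assumes "finite D" "\<forall>(R, ts)\<in>D. length ts \<le> A"
  shows "card (adom D) \<le> card D * A"
proof -
  have "adom D = (\<Union>f\<in>D. set (snd f))" unfolding adom_def by force
  then have "card (adom D) \<le> (\<Sum>f\<in>D. card (set (snd f)))"
    using card_UN_le[OF assms(1)] by simp
  also have "\<dots> \<le> (\<Sum>f\<in>D. A)"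
    using assms(2) by (intro sum_mono) (fastforce intro: card_length[THEN le_trans])
  finally show ?thesis by simp
qed

lemma card_adom_le_card_adom_Diff:
  assumes "finite C" "finite D" "\<forall>(R, ts)\<in>C - D. length ts \<le> A"
  shows "card (adom C) \<le> card (adom D) + card (C - D) * A"
proof -
  have "card (adom C) \<le> card (adom D \<union> adom (C - D))"
    using assms(1,2) by (intro card_mono) (auto simp: finite_adom, auto simp: adom_def)
  also have "\<dots> \<le> card (adom D) + card (adom (C - D))" by (rule card_Un_le)
  also have "\<dots> \<le> card (adom D) + card (C - D) * A"
    using card_adom_le[of "C - D" A] assms(1,3) by simp
  finally show ?thesis .
qed

lemma inj_on_into_atLeastAtMost_fixing:
  fixes V W :: "nat set"
  assumes "finite V" "finite W"
  obtains \<sigma> where "inj_on \<sigma> (V \<union> W)" "\<forall>x\<in>W. \<sigma> x = x"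
    "\<sigma> ` (V \<union> W) \<subseteq> {0..Max (insert 0 W) + card V}"
proof -
  define m where "m = Max (insert 0 W)"
  have W_sub: "W \<subseteq> {0..m}" unfolding m_def using assms(2) by auto
  have "card (V - W) \<le> card V" using assms(1) by (rule card_mono) auto
  also have "\<dots> \<le> card ({0..m + card V} - W)"
    using W_sub card_mono[OF _ W_sub] assms(2) by (subst card_Diff_subset) auto
  finally obtain f where f: "inj_on f (V - W)" "f ` (V - W) \<subseteq> {0..m + card V} - W"
    using card_le_inj assms(1) by (metis finite_Diff finite_atLeastAtMost)
  define \<sigma> where "\<sigma> x = (if x \<in> W then x else f x)" for x
  have "inj_on \<sigma> (V \<union> W)"
    using f unfolding \<sigma>_def inj_on_def by auto
  moreover have "\<sigma> ` (V \<union> W) \<subseteq> {0..m + card V}"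
    using f W_sub unfolding \<sigma>_def by auto
  ultimately show thesis using that unfolding m_def \<sigma>_def by simp
qed

lemma ex_equiv_facts_over_atLeastAtMost:
  assumes "finite C" "syms_inst C \<subseteq> S" "card (adom C) \<le> k"
  shows "\<exists>C' \<subseteq> facts_over S {0..Max (insert 0 (set a)) + k}. cq_equiv (a, C) (a, C')"
proof -
  obtain \<sigma> where \<sigma>: "inj_on \<sigma> (adom C \<union> set a)" "\<forall>x\<in>set a. \<sigma> x = x"
    "\<sigma> ` (adom C \<union> set a) \<subseteq> {0..Max (insert 0 (set a)) + card (adom C)}"
    using inj_on_into_atLeastAtMost_fixing[of "adom C" "set a"] assms(1) finite_adom by blast
  have "rename \<sigma> (a, C) = (a, (\<lambda>(R, ts). (R, map \<sigma> ts)) ` C)"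
    using \<sigma>(2) by (simp add: rename_def atoms_def ans_def map_idI)
  moreover have "cq_equiv (a, C) (rename \<sigma> (a, C))"
    using \<sigma>(1) by (intro cq_equiv_rename) (simp add: atoms_def ans_def)
  moreover have "(\<lambda>(R, ts). (R, map \<sigma> ts)) ` C \<subseteq> facts_over S {0..Max (insert 0 (set a)) + k}"
    using \<sigma>(3) assms(2,3)
    by (auto simp: subset_facts_over_iff adom_rename_facts syms_inst_rename_facts)
  ultimately show ?thesis by auto
qed

lemma finitely_many_upto_equiv_mono:
  "finitely_many_upto_equiv P \<Longrightarrow> (\<And>q. Q q \<Longrightarrow> P q) \<Longrightarrow> finitely_many_upto_equiv Q"
  unfolding finitely_many_upto_equiv_def by blast

lemma finitely_many_upto_equiv_edit_dist_le:
  assumes q: "wf_cq q" and S: "finite S"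
  shows "finitely_many_upto_equiv (\<lambda>q'. wf_cq q' \<and> length (ans q') = length (ans q) \<and>
           syms_inst (atoms q') \<subseteq> S \<and> edit_dist q q' \<le> d)"
proof -
  define A where "A = Max (insert 0 (snd ` S))"
  define V where "V = {0..Max (insert 0 (set (ans q))) + (card (adom (atoms q)) + d * A)}"
  define F where "F = Pair (ans q) ` Pow (facts_over S V)"
  have "\<exists>q''\<in>F. cq_equiv q' q''"
    if q': "wf_cq q'" "length (ans q') = length (ans q)" "syms_inst (atoms q') \<subseteq> S"
      "edit_dist q q' \<le> d" for q'
  proof -
    obtain C where C: "finite C" "cq_equiv q' (ans q, C)" "syms_inst C \<subseteq> syms_inst (atoms q')"
      and new: "card (C - atoms q) \<le> edit_dist q q'"
      using ex_equiv_core_within_edit_dist[OF q q'(1,2)] .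
    have C_S: "syms_inst C \<subseteq> S" using C(3) q'(3) by (rule order.trans)
    have "length ts \<le> A" if "(R, ts) \<in> C" for R ts
    proof -
      have "(R, length ts) \<in> S" using that C_S unfolding syms_inst_def by force
      then have "length ts \<in> insert 0 (snd ` S)" by force
      then show ?thesis unfolding A_def using S by (intro Max_ge) auto
    qed
    then have "card (adom C) \<le> card (adom (atoms q)) + card (C - atoms q) * A"
      using q C(1) by (intro card_adom_le_card_adom_Diff) (auto simp: wf_cq_def)
    also have "\<dots> \<le> card (adom (atoms q)) + d * A"
      using new q'(4) by (intro add_left_mono mult_le_mono1) (rule order.trans)
    finally obtain C' where "C' \<subseteq> facts_over S V" "cq_equiv (ans q, C) (ans q, C')"
      using ex_equiv_facts_over_atLeastAtMost[OF C(1) C_S] unfolding V_def by blast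
    then show ?thesis using cq_equiv_trans[OF C(2)] unfolding F_def by blast
  qed
  moreover have "finite F" unfolding F_def V_def using S by (simp add: finite_facts_over)
  ultimately show ?thesis unfolding finitely_many_upto_equiv_def by blast
qed

definition edit_dist_minimal :: "'r cq \<Rightarrow> ('r cq \<Rightarrow> bool) \<Rightarrow> 'r cq \<Rightarrow> bool" where
  "edit_dist_minimal q P q' \<longleftrightarrow> P q' \<and> \<not> (\<exists>q''. P q'' \<and> edit_dist q q'' < edit_dist q q')"

lemma is_repair_eq:
  "is_repair q Ep En = edit_dist_minimal q (\<lambda>q'. candidate q Ep En q' \<and> fits q' Ep En)"
  unfolding is_repair_def edit_dist_minimal_def by (simp add: conj_assoc)

lemma is_generalization_eq:
  "is_generalization q Ep En =
     edit_dist_minimal q (\<lambda>q'. candidate q Ep En q' \<and> fits q' Ep En \<and> cq_contained q q')"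
  unfolding is_generalization_def edit_dist_minimal_def by (simp add: conj_assoc)

lemma is_specialization_eq:
  "is_specialization q Ep En =
     edit_dist_minimal q (\<lambda>q'. candidate q Ep En q' \<and> fits q' Ep En \<and> cq_contained q' q)"
  unfolding is_specialization_def edit_dist_minimal_def by (simp add: conj_assoc)

lemma ex_edit_dist_minimal: "\<exists>q'. P q' \<Longrightarrow> \<exists>q'. edit_dist_minimal q P q'"
  unfolding edit_dist_minimal_def using ex_has_least_nat[of P _ "edit_dist q"] by (meson not_le)

lemma finitely_many_upto_equiv_edit_dist_minimal:
  assumes "wf_cq q" "finite S"
    and "\<And>q'. P q' \<Longrightarrow> wf_cq q' \<and> length (ans q') = length (ans q) \<and> syms_inst (atoms q') \<subseteq> S"
  shows "finitely_many_upto_equiv (edit_dist_minimal q P)"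
proof (cases "\<exists>r. P r")
  case True
  then obtain r where "P r" ..
  then show ?thesis
    using finitely_many_upto_equiv_edit_dist_le[OF assms(1,2), of "edit_dist q r"] assms(3)
    unfolding edit_dist_minimal_def by (elim finitely_many_upto_equiv_mono) (meson not_le)
next
  case False
  then show ?thesis unfolding finitely_many_upto_equiv_def edit_dist_minimal_def by blast
qed

theorem theorem35:
  fixes q :: "'r cq" and Ep En :: "'r dex set"
  assumes "wf_cq q"
    and "finite Ep" and "finite En"
    and "\<forall>e\<in>Ep \<union> En. data_example (length (ans q)) e"
  shows "((\<exists>q'. candidate q Ep En q' \<and> fits q' Ep En) \<longrightarrow> (\<exists>q'. is_repair q Ep En q'))
       \<and> ((\<exists>q'. candidate q Ep En q' \<and> fits q' Ep En \<and> cq_contained q q')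
            \<longrightarrow> (\<exists>q'. is_generalization q Ep En q'))
       \<and> ((\<exists>q'. candidate q Ep En q' \<and> fits q' Ep En \<and> cq_contained q' q)
            \<longrightarrow> (\<exists>q'. is_specialization q Ep En q'))
       \<and> finitely_many_upto_equiv (is_repair q Ep En)
       \<and> finitely_many_upto_equiv (is_generalization q Ep En)
       \<and> finitely_many_upto_equiv (is_specialization q Ep En)"
proof -
  define S where "S = syms_inst (atoms q) \<union> syms_ex Ep \<union> syms_ex En"
  have "finite S"
    using assms unfolding S_def syms_ex_def syms_inst_def wf_cq_def data_example_def by auto
  have finitely_many:
    "finitely_many_upto_equiv (edit_dist_minimal q (\<lambda>q'. candidate q Ep En q' \<and> Q q'))"
    for Q :: "'r cq \<Rightarrow> bool"
    by (rule finitely_many_upto_equiv_edit_dist_minimal[OF assms(1) \<open>finite S\<close>])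
      (auto simp: candidate_def S_def)
  show ?thesis
    unfolding is_repair_eq is_generalization_eq is_specialization_eq
    by (intro conjI impI ex_edit_dist_minimal finitely_many)
qed

end
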